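(* Let $\phi$ be a uniformly convex N-function with indices $p^-$ and $p^+$, let $\Omega\subset\mathbb{R}^n$ be open, and let $0<\delta^-\le1\le\delta^+<\infty$, $\delta=(\delta^-,\delta^+)$. Then $$L^{p^-}(\Omega)\cap L^{p^+}(\Omega)\cap L^2(\Omega)\hookrightarrow L^{\phi_\delta}(\Omega)\hookrightarrow L^{p^-}(\Omega)+L^{p^+}(\Omega)+L^2(\Omega),$$ with embedding constants bounded uniformly with respect to $\delta$.
   Context: An N-function is a function $\phi:[0,\infty)\to[0,\infty)$ with right-continuous non-decreasing derivative $\phi'$, $\phi'(0)=0$, $\phi'(t)>0$ for $t>0$, $\phi'(t)\to\infty$, $\phi(t)=\int_0^t\phi'$. It is uniformly convex if $\phi\in C^1([0,\infty))\cap C^2((0,\infty))$ and $p^-:=\inf_{t>0}\frac{\phi''(t)t}{\phi'(t)}+1>1$, $p^+:=\sup_{t>0}\frac{\phi''(t)t}{\phi'(t)}+1<\infty$. The truncated N-function $\phi_\delta$ is defined by $\phi_\delta'(t):=\frac{\phi'(\max(\delta^-,\min(t,\delta^+)))}{\max(\delta^-,\min(t,\delta^+))}\,t$, $\phi_\delta(t)=\int_0^t\phi_\delta'$. $L^{\phi_\delta}(\Omega)$ is the Orlicz space with Luxemburg norm $\|v\|=\inf\{\lambda>0:\int_\Omega\phi_\delta(|v|/\lambda)\le1\}$. Intersections of Lebesgue spaces carry the maximum of the norms, sums carry the infimum over decompositions of the sum of the norms. *)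

theory Defs
  imports "HOL-Analysis.Analysis"
begin

text \<open>An N-function: phi(t) = integral of a right-continuous non-decreasing phi'
  on [0,t], with phi'(0)=0, phi'(t)>0 for t>0 and phi'(t) tending to infinity.
  Only the values on [0,infinity) matter.\<close>
definition N_function :: "(real \<Rightarrow> real) \<Rightarrow> bool" where
  "N_function \<phi> \<longleftrightarrow> (\<exists>\<phi>'. mono_on {0..} \<phi>' \<and> (\<forall>t\<ge>0. continuous (at_right t) \<phi>') \<and>
     \<phi>' 0 = 0 \<and> (\<forall>t>0. \<phi>' t > 0) \<and> filterlim \<phi>' at_top at_top \<and>
     (\<forall>t\<ge>0. \<phi> t = integral {0..t} \<phi>'))"

definition p_minus :: "(real \<Rightarrow> real) \<Rightarrow> (real \<Rightarrow> real) \<Rightarrow> real" where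
  "p_minus \<phi>' \<phi>'' = Inf {\<phi>'' t * t / \<phi>' t + 1 | t. t > 0}"

definition p_plus :: "(real \<Rightarrow> real) \<Rightarrow> (real \<Rightarrow> real) \<Rightarrow> real" where
  "p_plus \<phi>' \<phi>'' = Sup {\<phi>'' t * t / \<phi>' t + 1 | t. t > 0}"

text \<open>Uniformly convex N-function phi with derivative phi' (C^1 on [0,infinity),
  one-sided at 0) and second derivative phi'' (C^2 on (0,infinity));
  p^- > 1 and p^+ < infinity (the latter = the quotient set is bounded above).\<close>
definition uniformly_convex :: "(real \<Rightarrow> real) \<Rightarrow> (real \<Rightarrow> real) \<Rightarrow> (real \<Rightarrow> real) \<Rightarrow> bool" where
  "uniformly_convex \<phi> \<phi>' \<phi>'' \<longleftrightarrow> N_function \<phi> \<and>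
     (\<forall>t\<ge>0. (\<phi> has_real_derivative \<phi>' t) (at t within {0..})) \<and> continuous_on {0..} \<phi>' \<and>
     (\<forall>t>0. (\<phi>' has_real_derivative \<phi>'' t) (at t)) \<and> continuous_on {0<..} \<phi>'' \<and>
     bdd_below {\<phi>'' t * t / \<phi>' t + 1 | t. t > 0} \<and>
     bdd_above {\<phi>'' t * t / \<phi>' t + 1 | t. t > 0} \<and>
     1 < p_minus \<phi>' \<phi>''"

definition clamp :: "real \<Rightarrow> real \<Rightarrow> real \<Rightarrow> real" where
  "clamp dm dp t = max dm (min t dp)"

definition trunc_deriv :: "(real \<Rightarrow> real) \<Rightarrow> real \<Rightarrow> real \<Rightarrow> real \<Rightarrow> real" where
  "trunc_deriv \<phi>' dm dp t = \<phi>' (clamp dm dp t) / clamp dm dp t * t"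

definition trunc_N :: "(real \<Rightarrow> real) \<Rightarrow> real \<Rightarrow> real \<Rightarrow> real \<Rightarrow> real" where
  "trunc_N \<phi>' dm dp t = integral {0..t} (trunc_deriv \<phi>' dm dp)"

definition Lp_space :: "real \<Rightarrow> 'a::euclidean_space set \<Rightarrow> ('a \<Rightarrow> real) set" where
  "Lp_space p \<Omega> = {v. v \<in> borel_measurable (lebesgue_on \<Omega>) \<and>
      (\<integral>\<^sup>+ x. ennreal (\<bar>v x\<bar> powr p) \<partial>(lebesgue_on \<Omega>)) < \<infinity>}"

definition Lp_norm :: "real \<Rightarrow> 'a::euclidean_space set \<Rightarrow> ('a \<Rightarrow> real) \<Rightarrow> real" where
  "Lp_norm p \<Omega> v = (enn2real (\<integral>\<^sup>+ x. ennreal (\<bar>v x\<bar> powr p) \<partial>(lebesgue_on \<Omega>))) powr (1 / p)"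

definition orlicz_modular :: "(real \<Rightarrow> real) \<Rightarrow> 'a::euclidean_space set \<Rightarrow> ('a \<Rightarrow> real) \<Rightarrow> real \<Rightarrow> ennreal" where
  "orlicz_modular \<Phi> \<Omega> v r = (\<integral>\<^sup>+ x. ennreal (\<Phi> (\<bar>v x\<bar> / r)) \<partial>(lebesgue_on \<Omega>))"

definition Orlicz_space :: "(real \<Rightarrow> real) \<Rightarrow> 'a::euclidean_space set \<Rightarrow> ('a \<Rightarrow> real) set" where
  "Orlicz_space \<Phi> \<Omega> = {v. v \<in> borel_measurable (lebesgue_on \<Omega>) \<and>
      (\<exists>r>0. orlicz_modular \<Phi> \<Omega> v r \<le> 1)}"

definition lux_norm :: "(real \<Rightarrow> real) \<Rightarrow> 'a::euclidean_space set \<Rightarrow> ('a \<Rightarrow> real) \<Rightarrow> real" where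
  "lux_norm \<Phi> \<Omega> v = Inf {r. r > 0 \<and> orlicz_modular \<Phi> \<Omega> v r \<le> 1}"

definition inter3_norm :: "real \<Rightarrow> real \<Rightarrow> 'a::euclidean_space set \<Rightarrow> ('a \<Rightarrow> real) \<Rightarrow> real" where
  "inter3_norm p q \<Omega> v = max (Lp_norm p \<Omega> v) (max (Lp_norm q \<Omega> v) (Lp_norm 2 \<Omega> v))"

definition sum3_decomps :: "real \<Rightarrow> real \<Rightarrow> 'a::euclidean_space set \<Rightarrow> ('a \<Rightarrow> real) \<Rightarrow>
    (('a \<Rightarrow> real) \<times> ('a \<Rightarrow> real) \<times> ('a \<Rightarrow> real)) set" where
  "sum3_decomps p q \<Omega> v = {(f, g, h). f \<in> Lp_space p \<Omega> \<and> g \<in> Lp_space q \<Omega> \<and> h \<in> Lp_space 2 \<Omega> \<and>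
      (\<forall>x\<in>\<Omega>. v x = f x + g x + h x)}"

definition sum3_space :: "real \<Rightarrow> real \<Rightarrow> 'a::euclidean_space set \<Rightarrow> ('a \<Rightarrow> real) set" where
  "sum3_space p q \<Omega> = {v. sum3_decomps p q \<Omega> v \<noteq> {}}"

definition sum3_norm :: "real \<Rightarrow> real \<Rightarrow> 'a::euclidean_space set \<Rightarrow> ('a \<Rightarrow> real) \<Rightarrow> real" where
  "sum3_norm p q \<Omega> v = Inf ((\<lambda>(f, g, h). Lp_norm p \<Omega> f + Lp_norm q \<Omega> g + Lp_norm 2 \<Omega> h)
      ` sum3_decomps p q \<Omega> v)"

end

(* The index bounds (p- - 1) phi'(t) <= t phi''(t) <= (p+ - 1) phi'(t) say that
   phi'(t) / t^(p- - 1) increases and phi'(t) / t^(p+ - 1) decreases, so phi' is squeezed between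
   phi'(1) t^(p- - 1) and phi'(1) t^(p+ - 1).  The truncation evaluates phi'(s)/s at a point lying
   between s and 1, whose powers lie between 1 and the corresponding powers of s; hence phi_delta'(s)
   is comparable to s, s^(p- - 1), s^(p+ - 1) with constants independent of delta, and integrating,
     c min(t^2, t^p-, t^p+) <= phi_delta(t) <= C (t^2 + t^p- + t^p+).
   The upper bound makes the modular of v/r at most 1 as soon as r exceeds a fixed multiple of
   the norm of v in the intersection.  For the lower bound, split v according to which of the
   three powers of |v|/r realises the minimum: each piece is controlled in the corresponding
   Lebesgue space by r, for every r admissible in the Luxemburg norm. *)

theory Submission
  imports Defs
begin

section \<open>Growth of the derivative of a uniformly convex N-function\<close>

lemma N_function_nonneg:
  assumes "N_function \<phi>"
  shows "\<phi> 0 = 0" and "0 \<le> t \<Longrightarrow> 0 \<le> \<phi> t"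
proof -
  obtain \<psi> where \<psi>_nonneg: "\<And>s. 0 \<le> s \<Longrightarrow> 0 \<le> \<psi> s"
    and \<phi>_eq: "\<And>s. 0 \<le> s \<Longrightarrow> \<phi> s = integral {0..s} \<psi>"
    using assms unfolding N_function_def by (metis less_eq_real_def order.refl)
  show "\<phi> 0 = 0" using \<phi>_eq[of 0] by simp
  assume "0 \<le> t"
  have "0 \<le> integral {0..t} \<psi>"
  proof (cases "\<psi> integrable_on {0..t}")
    case True
    then show ?thesis by (rule integral_nonneg) (simp add: \<psi>_nonneg)
  qed (simp add: not_integrable_integral)
  then show "0 \<le> \<phi> t" using \<phi>_eq[OF \<open>0 \<le> t\<close>] by simp
qed

lemma p_minus_le_index:
  assumes "uniformly_convex \<phi> \<phi>' \<phi>''" "0 < t"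
  shows "p_minus \<phi>' \<phi>'' \<le> \<phi>'' t * t / \<phi>' t + 1"
  unfolding p_minus_def by (rule cInf_lower) (use assms in \<open>auto simp: uniformly_convex_def\<close>)

lemma index_le_p_plus:
  assumes "uniformly_convex \<phi> \<phi>' \<phi>''" "0 < t"
  shows "\<phi>'' t * t / \<phi>' t + 1 \<le> p_plus \<phi>' \<phi>''"
  unfolding p_plus_def by (rule cSup_upper) (use assms in \<open>auto simp: uniformly_convex_def\<close>)

lemma p_minus_le_p_plus: "uniformly_convex \<phi> \<phi>' \<phi>'' \<Longrightarrow> p_minus \<phi>' \<phi>'' \<le> p_plus \<phi>' \<phi>''"
  using p_minus_le_index[of \<phi> \<phi>' \<phi>'' 1] index_le_p_plus[of \<phi> \<phi>' \<phi>'' 1] by simp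

lemma one_less_p_minus: "uniformly_convex \<phi> \<phi>' \<phi>'' \<Longrightarrow> 1 < p_minus \<phi>' \<phi>''"
  by (simp add: uniformly_convex_def)

lemma uniformly_convex_deriv_nonzero:
  assumes uc: "uniformly_convex \<phi> \<phi>' \<phi>''" and "0 < t"
  shows "\<phi>' t \<noteq> 0"
  \<comment> \<open>if \<open>\<phi>' t = 0\<close>, division by zero makes the index at \<open>t\<close> equal to 1\<close>
  using p_minus_le_index[OF assms] one_less_p_minus[OF uc] by auto

lemma uniformly_convex_deriv_pos:
  assumes uc: "uniformly_convex \<phi> \<phi>' \<phi>''" and "0 < t"
  shows "0 < \<phi>' t"
proof (rule ccontr)
  assume "\<not> 0 < \<phi>' t"
  with uniformly_convex_deriv_nonzero[OF uc \<open>0 < t\<close>] have neg_t: "\<phi>' t < 0" by linarith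
  have dphi: "\<And>x. 0 \<le> x \<Longrightarrow> (\<phi> has_real_derivative \<phi>' x) (at x within {0..})"
    and cont: "continuous_on {0..} \<phi>'" and N: "N_function \<phi>"
    using uc by (auto simp: uniformly_convex_def)
  have neg: "\<phi>' x < 0" if x: "0 < x" "x \<le> t" for x
  proof (rule ccontr)
    assume "\<not> \<phi>' x < 0"
    then have "0 \<le> \<phi>' x" by simp
    moreover have "continuous_on {x..t} \<phi>'"
      by (rule continuous_on_subset[OF cont]) (use x in auto)
    ultimately obtain y where "x \<le> y" "y \<le> t" "\<phi>' y = 0"
      using IVT2'[of \<phi>' t 0 x] neg_t x by auto
    then show False using uniformly_convex_deriv_nonzero[OF uc, of y] x by simp
  qed
  have "\<phi> t < \<phi> 0"
  proof (rule DERIV_neg_imp_decreasing_open[OF \<open>0 < t\<close>])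
    fix x assume x: "0 < x" "x < t"
    have "at x within {0..} = at x" by (rule at_within_interior) (use x in simp)
    then show "\<exists>y. (\<phi> has_real_derivative y) (at x) \<and> y < 0"
      using dphi[of x] neg[of x] x by auto
  next
    show "continuous_on {0..t} \<phi>"
      by (rule DERIV_continuous_on[where D = \<phi>'], rule DERIV_subset[OF dphi]) auto
  qed
  moreover have "0 \<le> \<phi> t" by (rule N_function_nonneg(2)[OF N]) (use \<open>0 < t\<close> in simp)
  ultimately show False using N_function_nonneg(1)[OF N] by simp
qed

lemma uniformly_convex_index_bounds:
  assumes uc: "uniformly_convex \<phi> \<phi>' \<phi>''" and t: "0 < t"
  shows "(p_minus \<phi>' \<phi>'' - 1) * \<phi>' t \<le> t * \<phi>'' t"
    and "t * \<phi>'' t \<le> (p_plus \<phi>' \<phi>'' - 1) * \<phi>' t"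
proof -
  have pos: "0 < \<phi>' t" by (rule uniformly_convex_deriv_pos[OF uc t])
  have "p_minus \<phi>' \<phi>'' - 1 \<le> \<phi>'' t * t / \<phi>' t" using p_minus_le_index[OF uc t] by simp
  then show "(p_minus \<phi>' \<phi>'' - 1) * \<phi>' t \<le> t * \<phi>'' t"
    using pos by (simp add: pos_le_divide_eq mult.commute)
  have "\<phi>'' t * t / \<phi>' t \<le> p_plus \<phi>' \<phi>'' - 1" using index_le_p_plus[OF uc t] by simp
  then show "t * \<phi>'' t \<le> (p_plus \<phi>' \<phi>'' - 1) * \<phi>' t"
    using pos by (simp add: pos_divide_le_eq mult.commute)
qed

lemma divide_powr_mono_of_elasticity:
  fixes f f' :: "real \<Rightarrow> real"
  assumes deriv: "\<And>x. 0 < x \<Longrightarrow> (f has_real_derivative f' x) (at x)"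
    and elasticity: "\<And>x. 0 < x \<Longrightarrow> e * f x \<le> x * f' x"
    and "0 < a" "a \<le> b"
  shows "f a / a powr e \<le> f b / b powr e"
proof (rule DERIV_nonneg_imp_nondecreasing[OF \<open>a \<le> b\<close>])
  fix x assume "a \<le> x" "x \<le> b"
  with \<open>0 < a\<close> have x: "0 < x" by linarith
  have "((\<lambda>x. f x / x powr e) has_real_derivative
      (f' x * x powr e - f x * (e * x powr (e - 1))) / (x powr e * x powr e)) (at x)"
    by (rule DERIV_divide[OF deriv[OF x] has_real_derivative_powr[OF x]]) (use x in simp)
  moreover have "f' x * x powr e - f x * (e * x powr (e - 1)) = (x * f' x - e * f x) * x powr (e - 1)"
    using x by (simp add: powr_mult_base algebra_simps)
  moreover have "0 \<le> (x * f' x - e * f x) * x powr (e - 1)"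
    using elasticity[OF x] by simp
  ultimately show "\<exists>y. ((\<lambda>x. f x / x powr e) has_real_derivative y) (at x) \<and> 0 \<le> y"
    by fastforce
qed

lemma uniformly_convex_deriv_powr_bounds:
  assumes uc: "uniformly_convex \<phi> \<phi>' \<phi>''" and s: "0 < s"
  defines "p \<equiv> p_minus \<phi>' \<phi>''" and "q \<equiv> p_plus \<phi>' \<phi>''"
  shows "s \<le> 1 \<Longrightarrow> \<phi>' 1 * s powr (q - 1) \<le> \<phi>' s \<and> \<phi>' s \<le> \<phi>' 1 * s powr (p - 1)"
    and "1 \<le> s \<Longrightarrow> \<phi>' 1 * s powr (p - 1) \<le> \<phi>' s \<and> \<phi>' s \<le> \<phi>' 1 * s powr (q - 1)"
proof -
  have deriv: "\<And>x. 0 < x \<Longrightarrow> (\<phi>' has_real_derivative \<phi>'' x) (at x)"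
    using uc by (simp add: uniformly_convex_def)
  have mono_p: "\<phi>' x / x powr (p - 1) \<le> \<phi>' y / y powr (p - 1)" if "0 < x" "x \<le> y" for x y
    using divide_powr_mono_of_elasticity[OF deriv _ that] uniformly_convex_index_bounds(1)[OF uc]
    by (simp add: p_def)
  have antimono_q: "\<phi>' y / y powr (q - 1) \<le> \<phi>' x / x powr (q - 1)" if "0 < x" "x \<le> y" for x y
  proof -
    have "- \<phi>' x / x powr (q - 1) \<le> - \<phi>' y / y powr (q - 1)"
    proof (rule divide_powr_mono_of_elasticity[OF _ _ that])
      show "((\<lambda>x. - \<phi>' x) has_real_derivative - \<phi>'' z) (at z)" if "0 < z" for z
        using deriv[OF that] by (rule DERIV_minus)
      show "(q - 1) * - \<phi>' z \<le> z * - \<phi>'' z" if "0 < z" for z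
        using uniformly_convex_index_bounds(2)[OF uc that] by (simp add: q_def)
    qed
    then show ?thesis by simp
  qed
  show "s \<le> 1 \<Longrightarrow> \<phi>' 1 * s powr (q - 1) \<le> \<phi>' s \<and> \<phi>' s \<le> \<phi>' 1 * s powr (p - 1)"
    using mono_p[OF s, of 1] antimono_q[OF s, of 1] s by (simp add: pos_le_divide_eq pos_divide_le_eq)
  show "1 \<le> s \<Longrightarrow> \<phi>' 1 * s powr (p - 1) \<le> \<phi>' s \<and> \<phi>' s \<le> \<phi>' 1 * s powr (q - 1)"
    using mono_p[OF zero_less_one, of s] antimono_q[OF zero_less_one, of s] s
    by (simp add: pos_le_divide_eq pos_divide_le_eq)
qed

lemma powr_between_one:
  fixes s x e :: real
  assumes "0 < s" "min 1 s \<le> x" "x \<le> max 1 s"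
  shows "min 1 (s powr e) \<le> x powr e" and "x powr e \<le> max 1 (s powr e)"
proof -
  have sandwich: "min (u powr e) (w powr e) \<le> x powr e \<and> x powr e \<le> max (u powr e) (w powr e)"
    if "0 < u" "u \<le> x" "x \<le> w" for u w
    using that powr_mono2[of e u x] powr_mono2[of e x w] powr_mono2'[of e u x] powr_mono2'[of e x w]
    by (cases "0 \<le> e") auto
  consider "s \<le> x" "x \<le> 1" | "1 \<le> x" "x \<le> s"
    using assms by (auto simp: min_def max_def split: if_splits)
  then have "min 1 (s powr e) \<le> x powr e \<and> x powr e \<le> max 1 (s powr e)"
    by cases (use sandwich[of s 1] sandwich[of 1 s] assms(1) in \<open>auto simp: min.commute max.commute\<close>)
  then show "min 1 (s powr e) \<le> x powr e" "x powr e \<le> max 1 (s powr e)" by auto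
qed

section \<open>Bounds for the truncated N-function, uniform in the truncation\<close>

lemma clamp_between_one:
  assumes "dm \<le> 1" "1 \<le> dp"
  shows "min 1 s \<le> clamp dm dp s" and "clamp dm dp s \<le> max 1 s"
  using assms by (auto simp: clamp_def)

lemma uniformly_convex_deriv_ratio_bounds:
  assumes uc: "uniformly_convex \<phi> \<phi>' \<phi>''" and s: "0 < s" and c: "min 1 s \<le> c" "c \<le> max 1 s"
  defines "p \<equiv> p_minus \<phi>' \<phi>''" and "q \<equiv> p_plus \<phi>' \<phi>''"
  shows "\<phi>' 1 * min 1 (min (s powr (p - 2)) (s powr (q - 2))) \<le> \<phi>' c / c"
    and "\<phi>' c / c \<le> \<phi>' 1 * max 1 (max (s powr (p - 2)) (s powr (q - 2)))"
proof -
  have c0: "0 < c" using s c(1) by simp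
  have a: "0 < \<phi>' 1" by (rule uniformly_convex_deriv_pos[OF uc]) simp
  have div_c: "\<phi>' 1 * c powr (e - 1) / c = \<phi>' 1 * c powr (e - 2)" for e
    using c0 by (simp add: powr_diff power2_eq_square)
  have ratio: "\<phi>' 1 * c powr (e - 2) \<le> \<phi>' c / c \<and> \<phi>' c / c \<le> \<phi>' 1 * c powr (e' - 2)"
    if "\<phi>' 1 * c powr (e - 1) \<le> \<phi>' c \<and> \<phi>' c \<le> \<phi>' 1 * c powr (e' - 1)" for e e'
    using that divide_right_mono[of _ _ c] c0 unfolding div_c[symmetric] by auto
  have a_min: "\<phi>' 1 * min x y \<le> \<phi>' 1 * x" "\<phi>' 1 * min x y \<le> \<phi>' 1 * y"
    and a_max: "\<phi>' 1 * x \<le> \<phi>' 1 * max x y" "\<phi>' 1 * y \<le> \<phi>' 1 * max x y" for x y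
    using a by (simp_all add: mult_left_mono)
  have "\<phi>' 1 * min (c powr (p - 2)) (c powr (q - 2)) \<le> \<phi>' c / c \<and>
      \<phi>' c / c \<le> \<phi>' 1 * max (c powr (p - 2)) (c powr (q - 2))"
  proof (cases "c \<le> 1")
    case True
    have "\<phi>' 1 * c powr (q - 2) \<le> \<phi>' c / c \<and> \<phi>' c / c \<le> \<phi>' 1 * c powr (p - 2)"
      by (rule ratio) (use uniformly_convex_deriv_powr_bounds(1)[OF uc c0 True] in \<open>simp add: p_def q_def\<close>)
    then show ?thesis
      using a_min(2)[of "c powr (p - 2)" "c powr (q - 2)"] a_max(1)[of "c powr (p - 2)" "c powr (q - 2)"]
      by linarith
  next
    case False
    have "\<phi>' 1 * c powr (p - 2) \<le> \<phi>' c / c \<and> \<phi>' c / c \<le> \<phi>' 1 * c powr (q - 2)"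
      by (rule ratio) (use uniformly_convex_deriv_powr_bounds(2)[OF uc c0] False in \<open>simp add: p_def q_def\<close>)
    then show ?thesis
      using a_min(1)[of "c powr (p - 2)" "c powr (q - 2)"] a_max(2)[of "c powr (p - 2)" "c powr (q - 2)"]
      by linarith
  qed
  moreover note powr_between_one[OF s c, of "p - 2"] powr_between_one[OF s c, of "q - 2"]
  ultimately show "\<phi>' 1 * min 1 (min (s powr (p - 2)) (s powr (q - 2))) \<le> \<phi>' c / c"
    and "\<phi>' c / c \<le> \<phi>' 1 * max 1 (max (s powr (p - 2)) (s powr (q - 2)))"
    using a by (smt (verit) mult_left_mono min.bounded_iff max.bounded_iff)+
qed

lemma trunc_deriv_bounds:
  assumes uc: "uniformly_convex \<phi> \<phi>' \<phi>''" and d: "dm \<le> 1" "1 \<le> dp" and s: "0 \<le> s"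
  defines "p \<equiv> p_minus \<phi>' \<phi>''" and "q \<equiv> p_plus \<phi>' \<phi>''"
  shows "\<phi>' 1 * min s (min (s powr (p - 1)) (s powr (q - 1))) \<le> trunc_deriv \<phi>' dm dp s"
    and "trunc_deriv \<phi>' dm dp s \<le> \<phi>' 1 * (s + s powr (p - 1) + s powr (q - 1))"
proof -
  have "\<phi>' 1 * min s (min (s powr (p - 1)) (s powr (q - 1))) \<le> trunc_deriv \<phi>' dm dp s \<and>
    trunc_deriv \<phi>' dm dp s \<le> \<phi>' 1 * max s (max (s powr (p - 1)) (s powr (q - 1)))"
  proof (cases "s = 0")
    case True
    then show ?thesis by (simp add: trunc_deriv_def)
  next
    case False
    with s have s: "0 < s" by simp
    have pw: "s * s powr (e - 2) = s powr (e - 1)" for e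
      using s by (simp add: powr_mult_base)
    let ?r = "\<phi>' (clamp dm dp s) / clamp dm dp s"
    note R = uniformly_convex_deriv_ratio_bounds[OF uc s clamp_between_one[OF d], folded p_def q_def]
    have T: "trunc_deriv \<phi>' dm dp s = s * ?r"
      by (simp add: trunc_deriv_def)
    have min_eq: "s * min 1 (min (s powr (p - 2)) (s powr (q - 2)))
        = min s (min (s powr (p - 1)) (s powr (q - 1)))"
      using s by (simp add: min_mult_distrib_left pw)
    have max_eq: "s * max 1 (max (s powr (p - 2)) (s powr (q - 2)))
        = max s (max (s powr (p - 1)) (s powr (q - 1)))"
      using s by (simp add: max_mult_distrib_left pw)
    show ?thesis
      using mult_left_mono[OF R(1), of s] mult_left_mono[OF R(2), of s] s
      unfolding T mult.left_commute[of s "\<phi>' 1"] min_eq max_eq by simp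
  qed
  moreover have "max s (max (s powr (p - 1)) (s powr (q - 1))) \<le> s + s powr (p - 1) + s powr (q - 1)"
    using s by simp
  ultimately show "\<phi>' 1 * min s (min (s powr (p - 1)) (s powr (q - 1))) \<le> trunc_deriv \<phi>' dm dp s"
    and "trunc_deriv \<phi>' dm dp s \<le> \<phi>' 1 * (s + s powr (p - 1) + s powr (q - 1))"
    using uniformly_convex_deriv_pos[OF uc zero_less_one] by (auto intro: order_trans mult_left_mono)
qed

lemma continuous_on_trunc_deriv:
  assumes cont: "continuous_on {0..} \<phi>'" and d: "0 < dm" "dm \<le> dp"
  shows "continuous_on UNIV (trunc_deriv \<phi>' dm dp)"
proof -
  have clamp_ge: "dm \<le> clamp dm dp x" for x by (simp add: clamp_def)
  have cont_clamp: "continuous_on UNIV (clamp dm dp)"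
    unfolding clamp_def by (intro continuous_intros)
  have "continuous_on UNIV (\<lambda>x. \<phi>' (clamp dm dp x))"
    by (rule continuous_on_compose2[OF cont cont_clamp]) (use clamp_ge d in \<open>auto intro: order_trans[OF less_imp_le]\<close>)
  moreover have "clamp dm dp x \<noteq> 0" for x using clamp_ge[of x] d by linarith
  ultimately show ?thesis
    unfolding trunc_deriv_def[abs_def] by (intro continuous_intros cont_clamp) auto
qed

lemma integral_between_monotone_envelopes:
  fixes f m M :: "real \<Rightarrow> real"
  assumes f: "continuous_on {0..t} f" and t: "0 \<le> t"
    and m: "mono_on {0..} m" "\<And>s. 0 \<le> s \<Longrightarrow> 0 \<le> m s" "\<And>s. 0 \<le> s \<Longrightarrow> m s \<le> f s"
    and M: "mono_on {0..} M" "\<And>s. 0 \<le> s \<Longrightarrow> f s \<le> M s"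
  shows "t / 2 * m (t / 2) \<le> integral {0..t} f" and "integral {0..t} f \<le> t * M t"
proof -
  have int: "f integrable_on {a..b}" if "0 \<le> a" "b \<le> t" for a b
    by (rule integrable_continuous_interval, rule continuous_on_subset[OF f]) (use that in auto)
  have "integral {0..t} f \<le> integral {0..t} (\<lambda>_. M t)"
  proof (rule integral_le[OF int integrable_const_ivl])
    fix x assume x: "x \<in> {0..t}"
    then have "M x \<le> M t" by (intro mono_onD[OF M(1)]) auto
    with M(2)[of x] x show "f x \<le> M t" by simp
  qed simp_all
  then show "integral {0..t} f \<le> t * M t" using t by simp
  have "0 \<le> integral {0..t/2} f"
  proof (rule integral_nonneg[OF int])
    fix x assume "x \<in> {0..t/2}"
    then show "0 \<le> f x" using m(2,3)[of x] by simp
  qed (use t in simp_all)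
  moreover have "integral {t/2..t} (\<lambda>_. m (t/2)) \<le> integral {t/2..t} f"
  proof (rule integral_le[OF integrable_const_ivl int])
    fix x assume x: "x \<in> {t/2..t}"
    then have "m (t/2) \<le> m x" using t by (intro mono_onD[OF m(1)]) auto
    with m(3)[of x] x t show "m (t/2) \<le> f x" by simp
  qed (use t in simp_all)
  moreover have "integral {0..t/2} f + integral {t/2..t} f = integral {0..t} f"
    by (rule Henstock_Kurzweil_Integration.integral_combine[OF _ _ int]) (use t in auto)
  ultimately show "t / 2 * m (t / 2) \<le> integral {0..t} f" using t by simp
qed

lemma mono_integral_from_zero:
  fixes f :: "real \<Rightarrow> real"
  assumes cont: "continuous_on {0..} f" and nonneg: "\<And>s. 0 \<le> s \<Longrightarrow> 0 \<le> f s"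
  shows "mono (\<lambda>t. integral {0..t} f)"
proof (rule monoI)
  fix x y :: real assume "x \<le> y"
  have int: "f integrable_on {a..b}" if "0 \<le> a" for a b
    by (rule integrable_continuous_interval, rule continuous_on_subset[OF cont]) (use that in auto)
  have nonneg_int: "0 \<le> integral {a..b} f" if "0 \<le> a" for a b
    by (rule integral_nonneg[OF int[OF that]]) (use that nonneg in auto)
  show "integral {0..x} f \<le> integral {0..y} f"
  proof (cases "0 \<le> x")
    case True
    have "integral {0..x} f + integral {x..y} f = integral {0..y} f"
      by (rule Henstock_Kurzweil_Integration.integral_combine[OF _ _ int]) (use True \<open>x \<le> y\<close> in auto)
    then show ?thesis using nonneg_int[OF True, of y] by linarith
  qed (use nonneg_int[of 0 y] in simp)
qed

lemma mono_trunc_N: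
  assumes uc: "uniformly_convex \<phi> \<phi>' \<phi>''" and d: "0 < dm" "dm \<le> 1" "1 \<le> dp"
  shows "mono (trunc_N \<phi>' dm dp)"
  unfolding trunc_N_def[abs_def]
proof (rule mono_integral_from_zero)
  show "continuous_on {0..} (trunc_deriv \<phi>' dm dp)"
    using continuous_on_trunc_deriv[of \<phi>' dm dp] uc d
    by (auto simp: uniformly_convex_def intro: continuous_on_subset)
  fix s :: real assume s: "0 \<le> s"
  have "0 \<le> \<phi>' 1 * min s (min (s powr (p_minus \<phi>' \<phi>'' - 1)) (s powr (p_plus \<phi>' \<phi>'' - 1)))"
    using uniformly_convex_deriv_pos[OF uc zero_less_one] s by simp
  then show "0 \<le> trunc_deriv \<phi>' dm dp s"
    using trunc_deriv_bounds(1)[OF uc d(2,3) s] by linarith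
qed

lemma trunc_N_bounds:
  assumes uc: "uniformly_convex \<phi> \<phi>' \<phi>''" and d: "0 < dm" "dm \<le> 1" "1 \<le> dp" and t: "0 \<le> t"
  defines "p \<equiv> p_minus \<phi>' \<phi>''" and "q \<equiv> p_plus \<phi>' \<phi>''"
  shows "\<phi>' 1 / 2 powr (q + 1) * min (t powr 2) (min (t powr p) (t powr q)) \<le> trunc_N \<phi>' dm dp t"
    and "trunc_N \<phi>' dm dp t \<le> \<phi>' 1 * (t powr 2 + t powr p + t powr q)"
proof -
  have p: "1 < p" and pq: "p \<le> q"
    using one_less_p_minus[OF uc] p_minus_le_p_plus[OF uc] by (simp_all add: p_def q_def)
  have a: "0 < \<phi>' 1" by (rule uniformly_convex_deriv_pos[OF uc]) simp
  define m where "m s = \<phi>' 1 * min s (min (s powr (p - 1)) (s powr (q - 1)))" for s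
  define M where "M s = \<phi>' 1 * (s + s powr (p - 1) + s powr (q - 1))" for s
  have pw_mono: "x powr (p - 1) \<le> y powr (p - 1)" "x powr (q - 1) \<le> y powr (q - 1)"
    if "0 \<le> x" "x \<le> y" for x y
    using that p pq by (simp_all add: powr_mono2)
  have mono_m: "mono_on {0..} m" and mono_M: "mono_on {0..} M"
    unfolding m_def M_def
    by (intro mono_onI mult_left_mono min.mono add_mono; use pw_mono a in simp)+
  have m_nonneg: "0 \<le> m s" if "0 \<le> s" for s
    unfolding m_def using a that by simp
  have cont: "continuous_on {0..t} (trunc_deriv \<phi>' dm dp)"
    using continuous_on_trunc_deriv[of \<phi>' dm dp] uc d
    by (auto simp: uniformly_convex_def intro: continuous_on_subset)
  have m_le: "m s \<le> trunc_deriv \<phi>' dm dp s" and le_M: "trunc_deriv \<phi>' dm dp s \<le> M s"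
    if "0 \<le> s" for s
    unfolding m_def M_def p_def q_def using trunc_deriv_bounds[OF uc d(2,3) that] by simp_all
  note envelopes = integral_between_monotone_envelopes[OF cont t mono_m m_nonneg m_le mono_M le_M]
  have lower: "t / 2 * m (t / 2) \<le> trunc_N \<phi>' dm dp t"
    and upper: "trunc_N \<phi>' dm dp t \<le> t * M t"
    unfolding trunc_N_def using envelopes by simp_all
  have pw: "x * x powr (e - 1) = x powr e" if "0 \<le> x" for x e :: real
    using powr_mult_base[OF that, of "e - 1"] by simp
  show "trunc_N \<phi>' dm dp t \<le> \<phi>' 1 * (t powr 2 + t powr p + t powr q)"
  proof -
    have "t * M t = \<phi>' 1 * (t * t powr (2 - 1) + t * t powr (p - 1) + t * t powr (q - 1))"
      using t by (simp add: M_def algebra_simps)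
    with upper show ?thesis by (simp only: pw[OF t])
  qed
  have half: "t powr e / 2 powr (q + 1) \<le> (t / 2) powr e" if "e \<le> q + 1" for e
  proof -
    have "t powr e / 2 powr (q + 1) \<le> t powr e / 2 powr e"
      using that by (intro divide_left_mono) auto
    then show ?thesis using t by (simp add: powr_divide)
  qed
  have "min (t powr 2) (min (t powr p) (t powr q)) / 2 powr (q + 1)
      \<le> min ((t / 2) powr 2) (min ((t / 2) powr p) ((t / 2) powr q))"
  proof -
    have "min (t powr 2 / 2 powr (q + 1)) (min (t powr p / 2 powr (q + 1)) (t powr q / 2 powr (q + 1)))
        \<le> min ((t / 2) powr 2) (min ((t / 2) powr p) ((t / 2) powr q))"
      by (intro min.mono half) (use p pq in auto)
    then show ?thesis by (simp add: min_divide_distrib_right)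
  qed
  then have "\<phi>' 1 * (min (t powr 2) (min (t powr p) (t powr q)) / 2 powr (q + 1))
      \<le> \<phi>' 1 * min ((t / 2) powr 2) (min ((t / 2) powr p) ((t / 2) powr q))"
    by (rule mult_left_mono) (use a in simp)
  also have "\<dots> = t / 2 * m (t / 2)"
  proof -
    have u: "0 \<le> t / 2" using t by simp
    have "t / 2 * min (t / 2) (min ((t / 2) powr (p - 1)) ((t / 2) powr (q - 1)))
        = min ((t / 2) * (t / 2) powr (2 - 1)) (min ((t / 2) * (t / 2) powr (p - 1)) ((t / 2) * (t / 2) powr (q - 1)))"
      using u by (simp add: min_mult_distrib_left)
    then show ?thesis unfolding m_def pw[OF u] by (simp only: mult.left_commute)
  qed
  finally have "\<phi>' 1 * (min (t powr 2) (min (t powr p) (t powr q)) / 2 powr (q + 1)) \<le> trunc_N \<phi>' dm dp t"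
    using lower by linarith
  then show "\<phi>' 1 / 2 powr (q + 1) * min (t powr 2) (min (t powr p) (t powr q)) \<le> trunc_N \<phi>' dm dp t"
    by (simp only: times_divide_eq_left times_divide_eq_right)
qed

section \<open>Embeddings between Orlicz and Lebesgue spaces\<close>

lemma Lp_norm_nonneg: "0 \<le> Lp_norm a \<Omega> v"
  by (simp add: Lp_norm_def)

lemma nn_integral_scaled_powr:
  assumes v: "v \<in> Lp_space a \<Omega>" and a: "0 < a" and r: "0 < r"
  shows "(\<integral>\<^sup>+ x. ennreal ((\<bar>v x\<bar> / r) powr a) \<partial>lebesgue_on \<Omega>) = ennreal ((Lp_norm a \<Omega> v / r) powr a)"
proof -
  let ?I = "\<integral>\<^sup>+ x. ennreal (\<bar>v x\<bar> powr a) \<partial>lebesgue_on \<Omega>"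
  have vm: "v \<in> borel_measurable (lebesgue_on \<Omega>)" and fin: "?I < \<infinity>"
    using v by (simp_all add: Lp_space_def)
  have "(\<integral>\<^sup>+ x. ennreal ((\<bar>v x\<bar> / r) powr a) \<partial>lebesgue_on \<Omega>)
      = (\<integral>\<^sup>+ x. ennreal (\<bar>v x\<bar> powr a) * ennreal (1 / r powr a) \<partial>lebesgue_on \<Omega>)"
    by (rule nn_integral_cong) (simp add: powr_divide ennreal_mult[symmetric])
  also have "\<dots> = ?I * ennreal (1 / r powr a)"
    by (rule nn_integral_multc) (use vm in measurable)
  also have "?I = ennreal (Lp_norm a \<Omega> v powr a)"
    using fin a by (simp add: Lp_norm_def powr_powr)
  finally show ?thesis
    by (simp add: powr_divide ennreal_mult[symmetric] Lp_norm_nonneg)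
qed

lemma nn_integral_scaled_powr_le:
  assumes v: "v \<in> Lp_space a \<Omega>" and a: "1 \<le> a" and r: "0 < r" and small: "Lp_norm a \<Omega> v / r \<le> \<epsilon>" "\<epsilon> \<le> 1"
  shows "(\<integral>\<^sup>+ x. ennreal ((\<bar>v x\<bar> / r) powr a) \<partial>lebesgue_on \<Omega>) \<le> ennreal \<epsilon>"
proof -
  have x: "0 \<le> Lp_norm a \<Omega> v / r" using r by (simp add: Lp_norm_nonneg)
  have "(Lp_norm a \<Omega> v / r) powr a \<le> Lp_norm a \<Omega> v / r"
    using powr_le_one_le[of "Lp_norm a \<Omega> v / r" a] x small a by (cases "Lp_norm a \<Omega> v / r = 0") auto
  then show ?thesis
    using nn_integral_scaled_powr[OF v _ r] a small(1) by (simp add: ennreal_leI)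
qed

lemma orlicz_modular_le_one_of_inter3:
  fixes \<Phi> :: "real \<Rightarrow> real" and \<Omega> :: "'n::euclidean_space set"
  assumes upper: "\<And>t. 0 \<le> t \<Longrightarrow> \<Phi> t \<le> K * (t powr 2 + t powr p + t powr q)"
    and K: "0 \<le> K" and L: "1 \<le> L" "3 * K \<le> L" and p: "1 \<le> p" and q: "1 \<le> q"
    and v: "v \<in> Lp_space p \<Omega> \<inter> Lp_space q \<Omega> \<inter> Lp_space 2 \<Omega>"
    and r: "L * inter3_norm p q \<Omega> v < r"
  shows "0 < r" and "orlicz_modular \<Phi> \<Omega> v r \<le> 1"
proof -
  let ?M = "lebesgue_on \<Omega>"
  let ?J = "\<lambda>a. \<integral>\<^sup>+ x. ennreal ((\<bar>v x\<bar> / r) powr a) \<partial>?M"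
  have N: "0 \<le> inter3_norm p q \<Omega> v"
    by (simp add: inter3_norm_def Lp_norm_nonneg le_max_iff_disj)
  have "0 \<le> L * inter3_norm p q \<Omega> v" using L N by simp
  with r show r0: "0 < r" by linarith
  have vm: "v \<in> borel_measurable ?M" using v by (simp add: Lp_space_def)
  have J: "?J a \<le> ennreal (1 / L)"
    if "v \<in> Lp_space a \<Omega>" "1 \<le> a" "Lp_norm a \<Omega> v \<le> inter3_norm p q \<Omega> v" for a
  proof (rule nn_integral_scaled_powr_le[OF that(1,2) r0])
    have "L * Lp_norm a \<Omega> v \<le> L * inter3_norm p q \<Omega> v"
      using that(3) L by (intro mult_left_mono) simp_all
    with r have "L * Lp_norm a \<Omega> v \<le> r" by linarith
    then show "Lp_norm a \<Omega> v / r \<le> 1 / L"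
      using r0 L by (simp add: field_simps)
  qed (use L in simp)
  have meas: "(\<lambda>x. ennreal ((\<bar>v x\<bar> / r) powr a)) \<in> borel_measurable ?M" for a
    using vm by measurable
  have "orlicz_modular \<Phi> \<Omega> v r \<le> (\<integral>\<^sup>+ x. ennreal K * (ennreal ((\<bar>v x\<bar> / r) powr 2)
      + ennreal ((\<bar>v x\<bar> / r) powr p) + ennreal ((\<bar>v x\<bar> / r) powr q)) \<partial>?M)"
    unfolding orlicz_modular_def
  proof (rule nn_integral_mono)
    fix x
    define t where "t = \<bar>v x\<bar> / r"
    have "0 \<le> t" using r0 by (simp add: t_def)
    then have "ennreal (\<Phi> t) \<le> ennreal (K * (t powr 2 + t powr p + t powr q))"
      by (intro ennreal_leI upper)
    also have "\<dots> = ennreal K * (ennreal (t powr 2) + ennreal (t powr p) + ennreal (t powr q))"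
      using K by (simp add: ennreal_mult' ennreal_plus)
    finally show "ennreal (\<Phi> (\<bar>v x\<bar> / r)) \<le> ennreal K * (ennreal ((\<bar>v x\<bar> / r) powr 2)
      + ennreal ((\<bar>v x\<bar> / r) powr p) + ennreal ((\<bar>v x\<bar> / r) powr q))"
      by (simp only: t_def)
  qed
  also have "\<dots> = ennreal K * (?J 2 + ?J p + ?J q)"
    by (simp add: nn_integral_cmult nn_integral_add meas borel_measurable_add)
  also have "\<dots> \<le> ennreal K * (ennreal (1 / L) + ennreal (1 / L) + ennreal (1 / L))"
    using v p q J[of 2] J[of p] J[of q]
    by (intro mult_left_mono add_mono) (auto simp: inter3_norm_def)
  also have "\<dots> = ennreal (3 * K / L)"
    using L K by (simp add: ennreal_plus[symmetric] ennreal_mult'[symmetric])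
  also have "\<dots> \<le> 1"
    using L by (simp add: ennreal_le_1)
  finally show "orlicz_modular \<Phi> \<Omega> v r \<le> 1" .
qed

lemma lux_norm_le_inter3_norm:
  fixes \<Phi> :: "real \<Rightarrow> real" and \<Omega> :: "'n::euclidean_space set"
  assumes upper: "\<And>t. 0 \<le> t \<Longrightarrow> \<Phi> t \<le> K * (t powr 2 + t powr p + t powr q)"
    and K: "0 \<le> K" and L: "1 \<le> L" "3 * K \<le> L" and p: "1 \<le> p" and q: "1 \<le> q"
    and v: "v \<in> Lp_space p \<Omega> \<inter> Lp_space q \<Omega> \<inter> Lp_space 2 \<Omega>"
  shows "v \<in> Orlicz_space \<Phi> \<Omega>" and "lux_norm \<Phi> \<Omega> v \<le> L * inter3_norm p q \<Omega> v"
proof -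
  let ?b = "L * inter3_norm p q \<Omega> v"
  note admissible = orlicz_modular_le_one_of_inter3[OF upper K L p q v]
  have "v \<in> borel_measurable (lebesgue_on \<Omega>)" using v by (simp add: Lp_space_def)
  then show "v \<in> Orlicz_space \<Phi> \<Omega>"
    unfolding Orlicz_space_def using admissible[of "?b + 1"] by auto
  show "lux_norm \<Phi> \<Omega> v \<le> ?b"
    unfolding lux_norm_def
  proof (rule field_le_epsilon)
    fix e :: real assume "0 < e"
    then show "Inf {r. 0 < r \<and> orlicz_modular \<Phi> \<Omega> v r \<le> 1} \<le> ?b + e"
      by (intro cInf_lower) (use admissible[of "?b + e"] in \<open>auto intro: bdd_belowI[of _ 0]\<close>)
  qed
qed

lemma Lp_norm_restrict_le_of_modular:
  fixes \<Phi> :: "real \<Rightarrow> real" and \<Omega> :: "'n::euclidean_space set"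
  assumes vm: "v \<in> borel_measurable (lebesgue_on \<Omega>)"
    and Q: "{x \<in> space (lebesgue_on \<Omega>). Q x} \<in> sets (lebesgue_on \<Omega>)"
    and \<Phi>m: "\<Phi> \<in> borel_measurable borel"
    and r: "0 < r" and modular: "orlicz_modular \<Phi> \<Omega> v r \<le> 1"
    and a: "1 \<le> a" and c: "0 < c" "c \<le> 1"
    and lower: "\<And>x. x \<in> \<Omega> \<Longrightarrow> Q x \<Longrightarrow> c * (\<bar>v x\<bar> / r) powr a \<le> \<Phi> (\<bar>v x\<bar> / r)"
  defines "w \<equiv> \<lambda>x. if Q x then v x else 0"
  shows "w \<in> Lp_space a \<Omega>" and "Lp_norm a \<Omega> w \<le> r / c"
proof -
  let ?M = "lebesgue_on \<Omega>"
  let ?I = "\<integral>\<^sup>+ x. ennreal (\<bar>w x\<bar> powr a) \<partial>?M"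
  have wm: "w \<in> borel_measurable ?M"
    unfolding w_def by (rule measurable_If[OF vm _ Q]) simp
  have k: "0 \<le> r powr a / c" using c by simp
  have pointwise: "ennreal (\<bar>w x\<bar> powr a) \<le> ennreal (r powr a / c) * ennreal (\<Phi> (\<bar>v x\<bar> / r))"
    if "x \<in> space ?M" for x
  proof (cases "Q x")
    case True
    have "\<bar>v x\<bar> powr a = r powr a * (\<bar>v x\<bar> / r) powr a" using r by (simp add: powr_divide)
    also have "\<dots> \<le> r powr a * (\<Phi> (\<bar>v x\<bar> / r) / c)"
      using lower[of x] that True c by (intro mult_left_mono) (simp_all add: pos_le_divide_eq mult.commute)
    finally show ?thesis
      using True k by (simp add: w_def ennreal_mult'[symmetric] ennreal_leI mult.commute)
  qed (simp add: w_def)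
  have \<Phi>v: "(\<lambda>x. ennreal (\<Phi> (\<bar>v x\<bar> / r))) \<in> borel_measurable ?M"
    using measurable_compose[OF _ \<Phi>m, of "\<lambda>x. \<bar>v x\<bar> / r"] vm by measurable
  have "?I \<le> (\<integral>\<^sup>+ x. ennreal (r powr a / c) * ennreal (\<Phi> (\<bar>v x\<bar> / r)) \<partial>?M)"
    by (rule nn_integral_mono[OF pointwise])
  also have "\<dots> = ennreal (r powr a / c) * orlicz_modular \<Phi> \<Omega> v r"
    unfolding orlicz_modular_def by (rule nn_integral_cmult[OF \<Phi>v])
  also have "\<dots> \<le> ennreal (r powr a / c)"
    using mult_left_mono[OF modular] by simp
  finally have I: "?I \<le> ennreal (r powr a / c)" .
  then show "w \<in> Lp_space a \<Omega>"
    unfolding Lp_space_def using wm by (simp add: le_less_trans)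
  have "Lp_norm a \<Omega> w \<le> (r powr a / c) powr (1 / a)"
    unfolding Lp_norm_def using enn2real_mono[OF I] k a by (simp add: powr_mono2)
  also have "\<dots> = r / c powr (1 / a)"
    using r c a by (simp add: powr_divide powr_powr)
  also have "\<dots> \<le> r / c"
  proof -
    have "c \<le> c powr (1 / a)"
      using powr_mono'[of "1 / a" 1 c] c a by simp
    then show ?thesis using r c by (intro divide_left_mono) auto
  qed
  finally show "Lp_norm a \<Omega> w \<le> r / c" .
qed

lemma sum3_decomp_of_modular:
  fixes \<Phi> :: "real \<Rightarrow> real" and \<Omega> :: "'n::euclidean_space set"
  assumes lower: "\<And>t. 0 \<le> t \<Longrightarrow> c * min (t powr 2) (min (t powr p) (t powr q)) \<le> \<Phi> t"
    and c: "0 < c" "c \<le> 1" and p: "1 \<le> p" and q: "1 \<le> q"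
    and \<Phi>m: "\<Phi> \<in> borel_measurable borel" and vm: "v \<in> borel_measurable (lebesgue_on \<Omega>)"
    and r: "0 < r" and modular: "orlicz_modular \<Phi> \<Omega> v r \<le> 1"
  shows "\<exists>(f, g, h) \<in> sum3_decomps p q \<Omega> v. Lp_norm p \<Omega> f + Lp_norm q \<Omega> g + Lp_norm 2 \<Omega> h \<le> 3 * r / c"
proof -
  let ?M = "lebesgue_on \<Omega>"
  define t where "t x = \<bar>v x\<bar> / r" for x
  define m where "m x = min (t x powr 2) (min (t x powr p) (t x powr q))" for x
  define Qh where "Qh x \<longleftrightarrow> m x = t x powr 2" for x
  define Qf where "Qf x \<longleftrightarrow> \<not> Qh x \<and> m x = t x powr p" for x
  define Qg where "Qg x \<longleftrightarrow> \<not> Qh x \<and> m x \<noteq> t x powr p" for x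
  have "t \<in> borel_measurable ?M" unfolding t_def[abs_def] using vm by measurable
  then have "m \<in> borel_measurable ?M" unfolding m_def[abs_def] by measurable
  with \<open>t \<in> borel_measurable ?M\<close> have sets: "{x \<in> space ?M. Qf x} \<in> sets ?M"
    "{x \<in> space ?M. Qg x} \<in> sets ?M" "{x \<in> space ?M. Qh x} \<in> sets ?M"
    unfolding Qh_def Qf_def Qg_def by measurable
  have m_le: "c * m x \<le> \<Phi> (t x)" for x
    unfolding m_def using lower r by (simp add: t_def)
  have m_q: "m x = t x powr q" if "Qg x" for x
    using that unfolding Qg_def Qh_def m_def by (auto simp: min_def split: if_splits)
  have bounds: "Qf x \<Longrightarrow> c * t x powr p \<le> \<Phi> (t x)" "Qg x \<Longrightarrow> c * t x powr q \<le> \<Phi> (t x)"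
    "Qh x \<Longrightarrow> c * t x powr 2 \<le> \<Phi> (t x)" for x
    using m_le[of x] m_q[of x] by (auto simp: Qf_def Qh_def)
  define f where "f x = (if Qf x then v x else 0)" for x
  define g where "g x = (if Qg x then v x else 0)" for x
  define h where "h x = (if Qh x then v x else 0)" for x
  note piece = Lp_norm_restrict_le_of_modular[OF vm _ \<Phi>m r modular _ c]
  have f: "f \<in> Lp_space p \<Omega>" "Lp_norm p \<Omega> f \<le> r / c"
    unfolding f_def[abs_def] using piece[OF sets(1) p] bounds(1) by (auto simp: t_def)
  have g: "g \<in> Lp_space q \<Omega>" "Lp_norm q \<Omega> g \<le> r / c"
    unfolding g_def[abs_def] using piece[OF sets(2) q] bounds(2) by (auto simp: t_def)
  have h: "h \<in> Lp_space 2 \<Omega>" "Lp_norm 2 \<Omega> h \<le> r / c"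
    unfolding h_def[abs_def] using piece[OF sets(3), of 2] bounds(3) by (auto simp: t_def)
  have "v x = f x + g x + h x" for x
    unfolding f_def g_def h_def Qf_def Qg_def by auto
  then have "(f, g, h) \<in> sum3_decomps p q \<Omega> v"
    unfolding sum3_decomps_def using f g h by auto
  moreover have "Lp_norm p \<Omega> f + Lp_norm q \<Omega> g + Lp_norm 2 \<Omega> h \<le> 3 * r / c"
    using f g h by simp
  ultimately show ?thesis by blast
qed

lemma sum3_norm_le_lux_norm:
  fixes \<Phi> :: "real \<Rightarrow> real" and \<Omega> :: "'n::euclidean_space set"
  assumes lower: "\<And>t. 0 \<le> t \<Longrightarrow> c * min (t powr 2) (min (t powr p) (t powr q)) \<le> \<Phi> t"
    and c: "0 < c" "c \<le> 1" and p: "1 \<le> p" and q: "1 \<le> q"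
    and \<Phi>m: "\<Phi> \<in> borel_measurable borel" and v: "v \<in> Orlicz_space \<Phi> \<Omega>"
  shows "v \<in> sum3_space p q \<Omega>" and "sum3_norm p q \<Omega> v \<le> 3 / c * lux_norm \<Phi> \<Omega> v"
proof -
  let ?S = "{r. 0 < r \<and> orlicz_modular \<Phi> \<Omega> v r \<le> 1}"
  let ?norm = "\<lambda>(f, g, h). Lp_norm p \<Omega> f + Lp_norm q \<Omega> g + Lp_norm 2 \<Omega> h"
  have vm: "v \<in> borel_measurable (lebesgue_on \<Omega>)" and S: "?S \<noteq> {}"
    using v by (auto simp: Orlicz_space_def)
  note decomp = sum3_decomp_of_modular[OF lower c p q \<Phi>m vm]
  show "v \<in> sum3_space p q \<Omega>"
    using S decomp unfolding sum3_space_def by blast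
  have bdd: "bdd_below (?norm ` sum3_decomps p q \<Omega> v)"
    by (rule bdd_belowI[of _ 0]) (auto simp: Lp_norm_nonneg)
  have "sum3_norm p q \<Omega> v \<le> 3 * r / c" if r: "r \<in> ?S" for r
  proof -
    obtain fgh where "fgh \<in> sum3_decomps p q \<Omega> v" "?norm fgh \<le> 3 * r / c"
      using decomp[of r] r by auto
    then show ?thesis
      unfolding sum3_norm_def using cInf_lower[OF imageI bdd] by fastforce
  qed
  then have "sum3_norm p q \<Omega> v * c / 3 \<le> Inf ?S"
    using c by (intro cInf_greatest[OF S]) (simp add: field_simps)
  then show "sum3_norm p q \<Omega> v \<le> 3 / c * lux_norm \<Phi> \<Omega> v"
    using c by (simp add: lux_norm_def field_simps)
qed

lemma trunc_N_embeddings: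
  fixes \<Omega> :: "'n::euclidean_space set"
  assumes uc: "uniformly_convex \<phi> \<phi>' \<phi>''" and d: "0 < dm" "dm \<le> 1" "1 \<le> dp"
    and c: "0 < c" "c \<le> 1" "\<phi>' 1 * c \<le> 1" "c \<le> \<phi>' 1 / 2 powr (p_plus \<phi>' \<phi>'' + 1)"
  defines "p \<equiv> p_minus \<phi>' \<phi>''" and "q \<equiv> p_plus \<phi>' \<phi>''" and "\<Phi> \<equiv> trunc_N \<phi>' dm dp"
  shows "v \<in> Lp_space p \<Omega> \<inter> Lp_space q \<Omega> \<inter> Lp_space 2 \<Omega> \<Longrightarrow>
      v \<in> Orlicz_space \<Phi> \<Omega> \<and> lux_norm \<Phi> \<Omega> v \<le> 3 / c * inter3_norm p q \<Omega> v"
    and "v \<in> Orlicz_space \<Phi> \<Omega> \<Longrightarrow>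
      v \<in> sum3_space p q \<Omega> \<and> sum3_norm p q \<Omega> v \<le> 3 / c * lux_norm \<Phi> \<Omega> v"
proof -
  have a: "0 < \<phi>' 1" by (rule uniformly_convex_deriv_pos[OF uc]) simp
  have p: "1 \<le> p" and q: "1 \<le> q"
    using one_less_p_minus[OF uc] p_minus_le_p_plus[OF uc] by (simp_all add: p_def q_def)
  have L: "1 \<le> 3 / c" "3 * \<phi>' 1 \<le> 3 / c"
    using c by (simp_all add: le_divide_eq)
  note upper = trunc_N_bounds(2)[OF uc d, folded p_def q_def \<Phi>_def]
  have lower: "c * min (t powr 2) (min (t powr p) (t powr q)) \<le> \<Phi> t" if "0 \<le> t" for t
    using mult_right_mono[OF c(4), of "min (t powr 2) (min (t powr p) (t powr q))"]
      trunc_N_bounds(1)[OF uc d that] that by (simp add: p_def q_def \<Phi>_def)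
  have "\<Phi> \<in> borel_measurable borel"
    unfolding \<Phi>_def by (rule borel_measurable_mono[OF mono_trunc_N[OF uc d]])
  then show "v \<in> Lp_space p \<Omega> \<inter> Lp_space q \<Omega> \<inter> Lp_space 2 \<Omega> \<Longrightarrow>
      v \<in> Orlicz_space \<Phi> \<Omega> \<and> lux_norm \<Phi> \<Omega> v \<le> 3 / c * inter3_norm p q \<Omega> v"
    and "v \<in> Orlicz_space \<Phi> \<Omega> \<Longrightarrow>
      v \<in> sum3_space p q \<Omega> \<and> sum3_norm p q \<Omega> v \<le> 3 / c * lux_norm \<Phi> \<Omega> v"
    using lux_norm_le_inter3_norm[OF upper _ L p q] sum3_norm_le_lux_norm[OF lower c(1,2) p q] a
    by auto
qed

theorem lemmaA7:
  fixes \<phi> \<phi>' \<phi>'' :: "real \<Rightarrow> real" and \<Omega> :: "'n::euclidean_space set"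
  assumes "uniformly_convex \<phi> \<phi>' \<phi>''"
    and "open \<Omega>"
  shows "\<exists>C>0. \<forall>dm dp. 0 < dm \<and> dm \<le> 1 \<and> 1 \<le> dp \<longrightarrow>
     (\<forall>v. v \<in> Lp_space (p_minus \<phi>' \<phi>'') \<Omega> \<inter> Lp_space (p_plus \<phi>' \<phi>'') \<Omega> \<inter> Lp_space 2 \<Omega> \<longrightarrow>
        v \<in> Orlicz_space (trunc_N \<phi>' dm dp) \<Omega> \<and>
        lux_norm (trunc_N \<phi>' dm dp) \<Omega> v \<le> C * inter3_norm (p_minus \<phi>' \<phi>'') (p_plus \<phi>' \<phi>'') \<Omega> v) \<and>
     (\<forall>v. v \<in> Orlicz_space (trunc_N \<phi>' dm dp) \<Omega> \<longrightarrow>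
        v \<in> sum3_space (p_minus \<phi>' \<phi>'') (p_plus \<phi>' \<phi>'') \<Omega> \<and>
        sum3_norm (p_minus \<phi>' \<phi>'') (p_plus \<phi>' \<phi>'') \<Omega> v \<le> C * lux_norm (trunc_N \<phi>' dm dp) \<Omega> v)"
proof -
  note uc = assms(1)
  define c where "c = min 1 (min (1 / \<phi>' 1) (\<phi>' 1 / 2 powr (p_plus \<phi>' \<phi>'' + 1)))"
  have a: "0 < \<phi>' 1" by (rule uniformly_convex_deriv_pos[OF uc]) simp
  have c: "0 < c" "c \<le> 1" "c \<le> \<phi>' 1 / 2 powr (p_plus \<phi>' \<phi>'' + 1)"
    using a by (simp_all add: c_def)
  have "c \<le> 1 / \<phi>' 1" by (simp add: c_def)
  with a have ac: "\<phi>' 1 * c \<le> 1" by (simp add: pos_le_divide_eq mult.commute)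
  note embeddings = trunc_N_embeddings[OF uc _ _ _ c(1,2) ac c(3)]
  show ?thesis
  proof (intro exI[of _ "3 / c"] conjI allI impI)
    show "0 < 3 / c" using c(1) by simp
  qed (use embeddings in blast)+
qed

end
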